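(* Let $\mathcal T$ be a triangulated category, linear over some field, with well-defined numerical Grothendieck group $\mathcal N(\mathcal T)$ of finite rank, and let $\sigma=(Z,\mathcal A)$ be a numerical stability condition on $\mathcal T$. Assume that $Z$ admits factorizations $Z=g_i\circ v_i$, $i=1,\dots,n$, through quotient lattices $v_i\colon\mathcal N(\mathcal T)\twoheadrightarrow\Lambda_i$, $g_i\colon\Lambda_i\to\mathbb C$, such that $\bigcap_i\ker(v_i)=\{0\}$, and that there are quadratic forms $Q_i$ on $\Lambda_i\otimes\mathbb R$ satisfying the support property (i.e. $Q_i(v_i(\mathcal E))\ge0$ for every $\sigma$-semistable $\mathcal E$ and $Q_i$ is negative definite on $\ker(g_i)$). Then for any $\lambda_1,\dots,\lambda_n>0$, $Z$ satisfies the support property on $\mathcal N(\mathcal T)$ with respect to $Q\coloneqq\lambda_1Q_1(v_1)+\dots+\lambda_nQ_n(v_n)$.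
   Context: The support property for $Z$ on $\mathcal N(\mathcal T)$ with respect to a quadratic form $Q$ on $\mathcal N(\mathcal T)\otimes\mathbb R$ means: $Q([\mathcal E])\ge0$ for every $\sigma$-semistable object $\mathcal E$, and $Q$ is negative definite on $\ker(Z)\subset\mathcal N(\mathcal T)\otimes\mathbb R$. *)

theory Defs
  imports "HOL-Analysis.Analysis"
begin

text \<open>N(T) is modelled as the lattice int^'r (finite rank), N(T) (x) R as real^'r.
  Each quotient lattice Lambda_i has rank d i and is identified with Z^(d i);
  vectors of Lambda_i (x) R are functions nat => real vanishing from index d i on.\<close>

definition to_real :: "int ^ 'r \<Rightarrow> real ^ 'r" where
  "to_real e = (\<chi> k. of_int (e $ k))"

definition lat_map :: "nat \<Rightarrow> (nat \<Rightarrow> 'r::finite \<Rightarrow> int) \<Rightarrow> int ^ 'r \<Rightarrow> nat \<Rightarrow> int" where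
  "lat_map d M e = (\<lambda>j. if j < d then (\<Sum>k\<in>UNIV. M j k * e $ k) else 0)"

definition real_map :: "nat \<Rightarrow> (nat \<Rightarrow> 'r::finite \<Rightarrow> int) \<Rightarrow> real ^ 'r \<Rightarrow> nat \<Rightarrow> real" where
  "real_map d M x = (\<lambda>j. if j < d then (\<Sum>k\<in>UNIV. of_int (M j k) * x $ k) else 0)"

definition surj_lat_map :: "nat \<Rightarrow> (nat \<Rightarrow> 'r::finite \<Rightarrow> int) \<Rightarrow> bool" where
  "surj_lat_map d M \<longleftrightarrow> (\<forall>y::nat \<Rightarrow> int. (\<forall>j\<ge>d. y j = 0) \<longrightarrow> (\<exists>e. lat_map d M e = y))"

definition lin_C :: "nat \<Rightarrow> (nat \<Rightarrow> complex) \<Rightarrow> (nat \<Rightarrow> real) \<Rightarrow> complex" where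
  "lin_C d c y = (\<Sum>j<d. c j * of_real (y j))"

definition central_charge :: "('r::finite \<Rightarrow> complex) \<Rightarrow> real ^ 'r \<Rightarrow> complex" where
  "central_charge z x = (\<Sum>k\<in>UNIV. z k * of_real (x $ k))"

definition quad_form :: "nat \<Rightarrow> (nat \<Rightarrow> nat \<Rightarrow> real) \<Rightarrow> (nat \<Rightarrow> real) \<Rightarrow> real" where
  "quad_form d A y = (\<Sum>j<d. \<Sum>l<d. A j l * y j * y l)"

text \<open>Support property for Z on N(T) with respect to Q on N(T) (x) R, where S is the set
  of classes [E] of sigma-semistable objects E.\<close>
definition support_property ::
  "(int ^ 'r) set \<Rightarrow> (real ^ 'r \<Rightarrow> complex) \<Rightarrow> (real ^ 'r \<Rightarrow> real) \<Rightarrow> bool" where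
  "support_property S Z Q \<longleftrightarrow>
     (\<forall>e\<in>S. Q (to_real e) \<ge> 0) \<and> (\<forall>x. Z x = 0 \<longrightarrow> x \<noteq> 0 \<longrightarrow> Q x < 0)"

end

theory Submission
  imports Defs
begin

text \<open>Positivity on semistable classes is inherited termwise. On the kernel of Z every term is
  \<open>\<le> 0\<close>, since Z factors through each \<open>v\<^sub>i\<close> on all of \<open>N \<otimes> \<real>\<close> and not only on the lattice, and
  some term is \<open>< 0\<close>, since the real kernels of the \<open>v\<^sub>i\<close> still intersect trivially. For the
  latter, the integer Gram matrix \<open>\<Sum>\<^sub>i v\<^sub>i\<^sup>T v\<^sub>i\<close> has no rational kernel (clear denominators to
  get a lattice vector in all \<open>ker v\<^sub>i\<close>), so its integer determinant is nonzero, hence it is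
  invertible over \<open>\<real>\<close> as well.\<close>

definition int_form :: "('i \<Rightarrow> 'r::finite \<Rightarrow> int) \<Rightarrow> 'i \<Rightarrow> 'a::comm_ring_1 ^ 'r \<Rightarrow> 'a" where
  "int_form B \<rho> x = (\<Sum>k\<in>UNIV. of_int (B \<rho> k) * x $ k)"

definition gram :: "('i \<Rightarrow> 'r::finite \<Rightarrow> int) \<Rightarrow> 'i set \<Rightarrow> 'a::comm_ring_1 ^ 'r ^ 'r" where
  "gram B R = (\<chi> k l. of_int (\<Sum>\<rho>\<in>R. B \<rho> k * B \<rho> l))"

lemma det_of_int_matrix:
  fixes A :: "int ^ 'n ^ 'n"
  shows "det ((\<chi> k l. of_int (A $ k $ l)) :: 'a::comm_ring_1 ^ 'n ^ 'n) = of_int (det A)"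
  unfolding det_def by simp

lemma det_gram: "det (gram B R :: 'a::comm_ring_1 ^ 'r ^ 'r) = of_int (det (gram B R :: int ^ 'r ^ 'r))"
proof -
  have "(gram B R :: 'a ^ 'r ^ 'r) = (\<chi> k l. of_int ((gram B R :: int ^ 'r ^ 'r) $ k $ l))"
    by (simp add: gram_def)
  then show ?thesis
    by (simp add: det_of_int_matrix)
qed

lemma gram_mult_vec:
  "(gram B R *v x) $ k = (\<Sum>\<rho>\<in>R. of_int (B \<rho> k) * int_form B \<rho> x)"
proof -
  have "(gram B R *v x) $ k = (\<Sum>l\<in>UNIV. \<Sum>\<rho>\<in>R. of_int (B \<rho> k) * (of_int (B \<rho> l) * x $ l))"
    by (simp add: gram_def matrix_vector_mult_def sum_distrib_right mult.assoc)
  also have "\<dots> = (\<Sum>\<rho>\<in>R. of_int (B \<rho> k) * int_form B \<rho> x)"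
    by (subst sum.swap) (simp add: int_form_def sum_distrib_left)
  finally show ?thesis .
qed

lemma gram_quadratic_form:
  "(\<Sum>k\<in>UNIV. x $ k * (gram B R *v x) $ k) = (\<Sum>\<rho>\<in>R. (int_form B \<rho> x)\<^sup>2)"
proof -
  have "(\<Sum>k\<in>UNIV. x $ k * (gram B R *v x) $ k)
      = (\<Sum>k\<in>UNIV. \<Sum>\<rho>\<in>R. (of_int (B \<rho> k) * x $ k) * int_form B \<rho> x)"
    by (simp add: gram_mult_vec sum_distrib_left mult_ac)
  also have "\<dots> = (\<Sum>\<rho>\<in>R. (int_form B \<rho> x)\<^sup>2)"
    by (subst sum.swap) (simp add: int_form_def sum_distrib_right power2_eq_square)
  finally show ?thesis .
qed

lemma int_form_eq_0_if_gram_kernel: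
  fixes x :: "'a::linordered_field ^ 'r::finite"
  assumes "finite R" and "gram B R *v x = 0" and "\<rho> \<in> R"
  shows "int_form B \<rho> x = 0"
proof -
  have "(\<Sum>\<rho>\<in>R. (int_form B \<rho> x)\<^sup>2) = 0"
    using gram_quadratic_form[of x B R] assms(2) by simp
  with assms(1,3) show ?thesis
    by (simp add: sum_nonneg_eq_0_iff)
qed

lemma rat_vec_common_denominator:
  fixes v :: "rat ^ 'r::finite"
  shows "\<exists>D::int. D > 0 \<and> (\<exists>w::int ^ 'r. \<forall>k. of_int (w $ k) = of_int D * v $ k)"
proof -
  define den where "den k = snd (quotient_of (v $ k))" for k
  define D where "D = (\<Prod>k\<in>UNIV. den k)"
  have den_pos: "den k > 0" for k
    unfolding den_def by (metis quotient_of_denom_pos prod.collapse)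
  have "\<exists>m::int. of_int m = of_int D * v $ k" for k
  proof -
    obtain a b where "quotient_of (v $ k) = (a, b)"
      by (metis surj_pair)
    then have "v $ k = of_int a / of_int b" and "den k = b"
      by (simp_all add: quotient_of_div den_def)
    moreover have "D = den k * (\<Prod>k'\<in>UNIV - {k}. den k')"
      unfolding D_def by (simp add: prod.remove)
    ultimately have "of_int D * v $ k = of_int ((\<Prod>k'\<in>UNIV - {k}. den k') * a)"
      using den_pos[of k] by simp
    then show ?thesis
      by metis
  qed
  then have "\<exists>w::int ^ 'r. \<forall>k. of_int (w $ k) = of_int D * v $ k"
    by (metis vec_lambda_beta)
  moreover have "D > 0"
    unfolding D_def using den_pos by (simp add: prod_pos)
  ultimately show ?thesis
    by blast
qed

lemma det_nonzero_iff_trivial_kernel: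
  fixes A :: "'a::field ^ 'n ^ 'n"
  shows "det A \<noteq> 0 \<longleftrightarrow> (\<forall>x. A *v x = 0 \<longrightarrow> x = 0)"
  by (metis invertible_det_nz invertible_left_inverse matrix_left_invertible_ker)

lemma det_gram_nonzero:
  fixes B :: "'i \<Rightarrow> 'r::finite \<Rightarrow> int"
  assumes "finite R"
    and int_kernel: "\<And>w :: int ^ 'r. (\<forall>\<rho>\<in>R. int_form B \<rho> w = 0) \<Longrightarrow> w = 0"
  shows "det (gram B R :: int ^ 'r ^ 'r) \<noteq> 0"
proof -
  have "v = 0" if "gram B R *v v = 0" for v :: "rat ^ 'r"
  proof -
    obtain D :: int and w :: "int ^ 'r" where "D > 0" and w: "\<And>k. of_int (w $ k) = of_int D * v $ k"
      using rat_vec_common_denominator[of v] by blast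
    have "of_int (int_form B \<rho> w) = of_int D * int_form B \<rho> v" for \<rho>
      by (simp add: int_form_def w sum_distrib_left mult_ac)
    then have "int_form B \<rho> w = 0" if "\<rho> \<in> R" for \<rho>
      using int_form_eq_0_if_gram_kernel[OF \<open>finite R\<close> \<open>gram B R *v v = 0\<close> that]
      by (metis mult_zero_right of_int_eq_0_iff)
    then have "w = 0"
      using int_kernel by blast
    with w \<open>D > 0\<close> show "v = 0"
      by (simp add: vec_eq_iff)
  qed
  then have "det (gram B R :: rat ^ 'r ^ 'r) \<noteq> 0"
    by (simp add: det_nonzero_iff_trivial_kernel)
  then show ?thesis
    by (metis det_gram of_int_0)
qed

lemma int_forms_kernel_trivial:
  fixes B :: "'i \<Rightarrow> 'r::finite \<Rightarrow> int" and x :: "'a::field_char_0 ^ 'r"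
  assumes "finite R"
    and "\<And>w :: int ^ 'r. (\<forall>\<rho>\<in>R. int_form B \<rho> w = 0) \<Longrightarrow> w = 0"
    and "\<forall>\<rho>\<in>R. int_form B \<rho> x = 0"
  shows "x = 0"
proof -
  have "det (gram B R :: 'a ^ 'r ^ 'r) \<noteq> 0"
    using det_gram_nonzero[OF assms(1,2)] by (metis det_gram of_int_eq_0_iff)
  moreover have "gram B R *v x = 0"
    using assms(3) by (simp add: vec_eq_iff gram_mult_vec)
  ultimately show ?thesis
    using det_nonzero_iff_trivial_kernel by blast
qed

lemma lat_maps_eq_0_iff_int_forms:
  fixes n :: nat
  shows "(\<forall>i<n. lat_map (d i) (M i) e = (\<lambda>_. 0))
     \<longleftrightarrow> (\<forall>\<rho>\<in>Sigma {..<n} (\<lambda>i. {..<d i}). int_form (case_prod M) \<rho> e = 0)"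
  by (auto simp: lat_map_def int_form_def fun_eq_iff)

lemma real_maps_eq_0_iff_int_forms:
  fixes n :: nat
  shows "(\<forall>i<n. real_map (d i) (M i) x = (\<lambda>_. 0))
     \<longleftrightarrow> (\<forall>\<rho>\<in>Sigma {..<n} (\<lambda>i. {..<d i}). int_form (case_prod M) \<rho> x = 0)"
  by (auto simp: real_map_def int_form_def fun_eq_iff)

lemma real_maps_jointly_injective:
  fixes n :: nat
    and x :: "real ^ 'r::finite"
  assumes "\<forall>e. (\<forall>i<n. lat_map (d i) (M i) e = (\<lambda>_. 0)) \<longrightarrow> e = 0"
    and "\<forall>i<n. real_map (d i) (M i) x = (\<lambda>_. 0)"
  shows "x = 0"
proof (rule int_forms_kernel_trivial)
  show "finite (Sigma {..<n} (\<lambda>i. {..<d i}))"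
    by simp
  show "w = 0" if "\<forall>\<rho>\<in>Sigma {..<n} (\<lambda>i. {..<d i}). int_form (case_prod M) \<rho> w = 0" for w :: "int ^ 'r"
    using assms(1) that by (simp only: lat_maps_eq_0_iff_int_forms)
  show "\<forall>\<rho>\<in>Sigma {..<n} (\<lambda>i. {..<d i}). int_form (case_prod M) \<rho> x = 0"
    using assms(2) by (simp only: real_maps_eq_0_iff_int_forms)
qed

lemma lin_C_real_map:
  "lin_C d c (real_map d N x) = central_charge (\<lambda>k. \<Sum>j<d. c j * of_int (N j k)) x"
  unfolding lin_C_def real_map_def central_charge_def
  by (simp add: sum_distrib_left sum_distrib_right mult_ac sum.swap[of _ "{..<d}"])

lemma central_charge_axis: "central_charge z (to_real (axis k 1)) = z k"
  by (simp add: central_charge_def to_real_def axis_def if_distrib cong: if_cong)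

lemma central_charge_factors_over_reals:
  assumes "\<forall>e. central_charge z (to_real e) = lin_C d c (real_map d N (to_real e))"
  shows "central_charge z x = lin_C d c (real_map d N x)"
proof -
  have "z = (\<lambda>k. \<Sum>j<d. c j * of_int (N j k))"
    using assms by (metis central_charge_axis lin_C_real_map)
  then show ?thesis
    by (simp add: lin_C_real_map)
qed

lemma real_map_vanishes_above: "j \<ge> d \<Longrightarrow> real_map d N x j = 0"
  by (simp add: real_map_def)

theorem lemma7p5:
  fixes S :: "(int ^ 'r) set"
    and z :: "'r \<Rightarrow> complex"
    and n :: nat
    and d :: "nat \<Rightarrow> nat"
    and M :: "nat \<Rightarrow> nat \<Rightarrow> 'r \<Rightarrow> int"
    and g :: "nat \<Rightarrow> nat \<Rightarrow> complex"
    and A :: "nat \<Rightarrow> nat \<Rightarrow> nat \<Rightarrow> real"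
    and lam :: "nat \<Rightarrow> real"
  assumes surj: "\<forall>i<n. surj_lat_map (d i) (M i)"
    and factor: "\<forall>i<n. \<forall>e. central_charge z (to_real e)
                        = lin_C (d i) (g i) (real_map (d i) (M i) (to_real e))"
    and ker_inter: "\<forall>e. (\<forall>i<n. lat_map (d i) (M i) e = (\<lambda>_. 0)) \<longrightarrow> e = 0"
    and Q_nonneg: "\<forall>i<n. \<forall>e\<in>S. quad_form (d i) (A i) (real_map (d i) (M i) (to_real e)) \<ge> 0"
    and Q_negdef: "\<forall>i<n. \<forall>y. (\<forall>j\<ge>d i. y j = 0) \<longrightarrow> lin_C (d i) (g i) y = 0 \<longrightarrow> y \<noteq> (\<lambda>_. 0)
                        \<longrightarrow> quad_form (d i) (A i) y < 0"
    and lam_pos: "\<forall>i<n. lam i > 0"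
  shows "support_property S (central_charge z)
           (\<lambda>x. \<Sum>i<n. lam i * quad_form (d i) (A i) (real_map (d i) (M i) x))"
  unfolding support_property_def
proof (intro conjI ballI allI impI)
  fix e assume "e \<in> S"
  then show "0 \<le> (\<Sum>i<n. lam i * quad_form (d i) (A i) (real_map (d i) (M i) (to_real e)))"
    using Q_nonneg lam_pos by (intro sum_nonneg) (simp add: less_imp_le)
next
  fix x :: "real ^ 'r" assume "central_charge z x = 0" and "x \<noteq> 0"
  define q where "q i = lam i * quad_form (d i) (A i) (real_map (d i) (M i) x)" for i
  have "q i < 0" if "i < n" and "real_map (d i) (M i) x \<noteq> (\<lambda>_. 0)" for i
    using that Q_negdef lam_pos \<open>central_charge z x = 0\<close>
      central_charge_factors_over_reals[of z "d i" "g i" "M i" x] factor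
    by (simp add: q_def real_map_vanishes_above mult_pos_neg)
  moreover have "q i = 0" if "real_map (d i) (M i) x = (\<lambda>_. 0)" for i
    using that by (simp add: q_def quad_form_def)
  moreover obtain i0 where "i0 < n" and "real_map (d i0) (M i0) x \<noteq> (\<lambda>_. 0)"
    using real_maps_jointly_injective[OF ker_inter] \<open>x \<noteq> 0\<close> by blast
  ultimately have "sum q {..<n} < sum (\<lambda>_. 0) {..<n}"
    by (intro sum_strict_mono_ex1) (auto simp: le_less)
  then show "(\<Sum>i<n. lam i * quad_form (d i) (A i) (real_map (d i) (M i) x)) < 0"
    by (simp add: q_def)
qed

end
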